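(* Let $\lambda_0,\lambda_1>0$, and let $\boldsymbol\alpha_0^\star$ and $\boldsymbol\alpha_1^\star$ be the optimal solutions of the dual problems $\max_{\boldsymbol\alpha\ge\mathbf0}D_{\lambda_0}(\boldsymbol\alpha)$ and $\max_{\boldsymbol\alpha\ge\mathbf0}D_{\lambda_1}(\boldsymbol\alpha)$, respectively. Then $$\Big\|\boldsymbol\alpha_1^\star-\frac{\lambda_0+\lambda_1}{2\lambda_0}\boldsymbol\alpha_0^\star\Big\|_2^2\le\Big\|\frac{\lambda_0-\lambda_1}{2\lambda_0}\boldsymbol\alpha_0^\star\Big\|_2^2.$$
   Context: Let $n,K,p\ge1$ be integers, $[n]=\{1,\dots,n\}$. For each $i\in[n]$ let $\mathbf x_i\in\mathbb R^p$ have nonnegative entries and let $\mathcal D_i,\mathcal S_i\subseteq[n]$ be sets of size $K$. Put $\mathbf c_{ij}=(\mathbf x_i-\mathbf x_j)\circ(\mathbf x_i-\mathbf x_j)$ (entrywise product). Vectors in $\mathbb R^{2nK}$ are indexed by the pairs $(i,l)$, $l\in\mathcal D_i$ ("different-class pairs") and $(i,j)$, $j\in\mathcal S_i$ ("same-class pairs"). $\mathbf C\in\mathbb R^{p\times2nK}$ has column $\mathbf c_{il}$ for each different-class pair and $-\mathbf c_{ij}$ for each same-class pair. Fix $L\ge U\ge0$, $\eta>0$; let $\mathbf t\in\mathbb R^{2nK}$ have entry $L$ at different-class pairs and $-U$ at same-class pairs; $[z]_+=\max\{z,0\}$ entrywise; $\mathbf 1$ the all-ones vector. For $\lambda>0$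 and $\boldsymbol\alpha\in\mathbb R^{2nK}_{\ge0}$ define $$D_\lambda(\boldsymbol\alpha)=-\frac14\|\boldsymbol\alpha\|_2^2+\mathbf t^\top\boldsymbol\alpha-\frac{\lambda\eta}{2}\|\mathbf m_\lambda(\boldsymbol\alpha)\|_2^2,\qquad\mathbf m_\lambda(\boldsymbol\alpha)=\frac{1}{\lambda\eta}[\mathbf C\boldsymbol\alpha-\lambda\mathbf1]_+.$$ This is the dual of the primal problem $\min_{\mathbf m\ge\mathbf0}\sum_{i}\big[\sum_{l\in\mathcal D_i}([L-\mathbf m^\top\mathbf c_{il}]_+)^2+\sum_{j\in\mathcal S_i}([-U+\mathbf m^\top\mathbf c_{ij}]_+)^2\big]+\lambda(\mathbf m^\top\mathbf1+\frac\eta2\|\mathbf m\|_2^2)$. *)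

theory Defs
  imports "HOL-Analysis.Analysis"
begin

text \<open>Index set of R^{2nK}: a triple (i, j, True) is the different-class pair (i,j) with
  j in D i; a triple (i, j, False) is the same-class pair (i,j) with j in S i.
  Vectors in R^{2nK} are functions on triples, considered on this index set.\<close>
definition pairs :: "nat \<Rightarrow> (nat \<Rightarrow> nat set) \<Rightarrow> (nat \<Rightarrow> nat set) \<Rightarrow> (nat \<times> nat \<times> bool) set" where
  "pairs n D S = {(i, j, True) | i j. i \<in> {1..n} \<and> j \<in> D i}
               \<union> {(i, j, False) | i j. i \<in> {1..n} \<and> j \<in> S i}"

definition cvec :: "(nat \<Rightarrow> nat \<Rightarrow> real) \<Rightarrow> nat \<Rightarrow> nat \<Rightarrow> nat \<Rightarrow> real" where
  "cvec x i j k = (x i k - x j k) * (x i k - x j k)"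

definition Ccol :: "(nat \<Rightarrow> nat \<Rightarrow> real) \<Rightarrow> nat \<times> nat \<times> bool \<Rightarrow> nat \<Rightarrow> real" where
  "Ccol x q k = (case q of (i, j, b) \<Rightarrow> if b then cvec x i j k else - cvec x i j k)"

definition Cmul :: "(nat \<Rightarrow> nat \<Rightarrow> real) \<Rightarrow> (nat \<times> nat \<times> bool) set \<Rightarrow> (nat \<times> nat \<times> bool \<Rightarrow> real) \<Rightarrow> nat \<Rightarrow> real" where
  "Cmul x P \<alpha> k = (\<Sum>q\<in>P. Ccol x q k * \<alpha> q)"

definition tvec :: "real \<Rightarrow> real \<Rightarrow> nat \<times> nat \<times> bool \<Rightarrow> real" where
  "tvec L U q = (case q of (i, j, b) \<Rightarrow> if b then L else - U)"

definition mvec :: "(nat \<Rightarrow> nat \<Rightarrow> real) \<Rightarrow> (nat \<times> nat \<times> bool) set \<Rightarrow> real \<Rightarrow> real \<Rightarrow> (nat \<times> nat \<times> bool \<Rightarrow> real) \<Rightarrow> nat \<Rightarrow> real" where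
  "mvec x P eta lam \<alpha> k = (1 / (lam * eta)) * max (Cmul x P \<alpha> k - lam) 0"

definition Dual :: "nat \<Rightarrow> nat \<Rightarrow> (nat \<Rightarrow> nat set) \<Rightarrow> (nat \<Rightarrow> nat set) \<Rightarrow> (nat \<Rightarrow> nat \<Rightarrow> real)
    \<Rightarrow> real \<Rightarrow> real \<Rightarrow> real \<Rightarrow> real \<Rightarrow> (nat \<times> nat \<times> bool \<Rightarrow> real) \<Rightarrow> real" where
  "Dual n p D S x L U eta lam \<alpha> =
     (let P = pairs n D S in
      - (1/4) * (\<Sum>q\<in>P. (\<alpha> q)\<^sup>2) + (\<Sum>q\<in>P. tvec L U q * \<alpha> q)
      - (lam * eta / 2) * (\<Sum>k<p. (mvec x P eta lam \<alpha> k)\<^sup>2))"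

definition feasible :: "(nat \<times> nat \<times> bool) set \<Rightarrow> (nat \<times> nat \<times> bool \<Rightarrow> real) \<Rightarrow> bool" where
  "feasible P \<alpha> \<longleftrightarrow> (\<forall>q\<in>P. 0 \<le> \<alpha> q) \<and> (\<forall>q. q \<notin> P \<longrightarrow> \<alpha> q = 0)"

definition dual_optimal :: "nat \<Rightarrow> nat \<Rightarrow> (nat \<Rightarrow> nat set) \<Rightarrow> (nat \<Rightarrow> nat set) \<Rightarrow> (nat \<Rightarrow> nat \<Rightarrow> real)
    \<Rightarrow> real \<Rightarrow> real \<Rightarrow> real \<Rightarrow> real \<Rightarrow> (nat \<times> nat \<times> bool \<Rightarrow> real) \<Rightarrow> bool" where
  "dual_optimal n p D S x L U eta lam \<alpha> \<longleftrightarrow>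
     feasible (pairs n D S) \<alpha> \<and>
     (\<forall>\<beta>. feasible (pairs n D S) \<beta> \<longrightarrow> Dual n p D S x L U eta lam \<beta> \<le> Dual n p D S x L U eta lam \<alpha>)"

end

theory Submission
  imports Defs
begin

text \<open>Substitute \<open>\<alpha> = \<lambda> \<beta>\<close>: then \<open>D\<^sub>\<lambda>(\<lambda> \<beta>) = \<lambda> \<Phi>\<^sub>\<lambda>(\<beta>)\<close> with
  \<open>\<Phi>\<^sub>\<lambda>(\<beta>) = -\<lambda>/4 \<parallel>\<beta>\<parallel>\<^sup>2 + t\<^sup>T\<beta> - \<parallel>[C\<beta> - 1]\<^sub>+\<parallel>\<^sup>2/(2\<eta>)\<close>, where
  only the quadratic term depends on \<open>\<lambda>\<close>. The hinge term is convex, so \<open>\<Phi>\<^sub>\<lambda>\<close> is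
  \<open>\<lambda>/2\<close>-strongly concave, and its maximiser \<open>\<beta>\<^sub>\<lambda>\<close> over the feasible cone satisfies
  \<open>\<Phi>\<^sub>\<lambda>(\<beta>) - \<Phi>\<^sub>\<lambda>(\<beta>\<^sub>\<lambda>) + \<lambda>/4 \<parallel>\<beta> - \<beta>\<^sub>\<lambda>\<parallel>\<^sup>2 \<le> 0\<close> for every feasible \<open>\<beta>\<close>.
  Adding this for \<open>(\<lambda>\<^sub>0, \<beta>\<^sub>1)\<close> and \<open>(\<lambda>\<^sub>1, \<beta>\<^sub>0)\<close>, the linear and hinge
  terms cancel and what remains,
  \<open>(\<lambda>\<^sub>1 - \<lambda>\<^sub>0)(\<parallel>\<beta>\<^sub>1\<parallel>\<^sup>2 - \<parallel>\<beta>\<^sub>0\<parallel>\<^sup>2) + (\<lambda>\<^sub>0 + \<lambda>\<^sub>1)\<parallel>\<beta>\<^sub>1 - \<beta>\<^sub>0\<parallel>\<^sup>2 \<le> 0\<close>,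
  is the claimed ball inclusion up to the positive factor \<open>\<lambda>\<^sub>1/2\<close>.\<close>

lemma convex_on_pos_part_sq: "convex_on UNIV (\<lambda>u::real. (max u 0)\<^sup>2)"
proof -
  have pos_part: "convex_on UNIV (\<lambda>u::real. max u 0)"
    by (rule convex_on_linorderI) (auto simp: max_def intro!: add_nonpos_nonpos mult_nonneg_nonpos)
  show ?thesis
    unfolding power2_eq_square
    by (rule convex_on_mul[OF pos_part pos_part]) (auto simp: mono_on_def)
qed

text \<open>First-order optimality of a strongly concave maximiser, without derivatives:
  \<open>A\<close> and \<open>B\<close> are the values at the maximiser and at another feasible point.\<close>
lemma strongly_concave_max_gap:
  fixes A B c :: real
  assumes "\<And>s. 0 < s \<Longrightarrow> s < 1 \<Longrightarrow> (1 - s) * A + s * B + s * (1 - s) * c \<le> A"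
  shows "B - A + c \<le> 0"
proof (rule tendsto_upperbound)
  show "((\<lambda>s. B - A + (1 - s) * c) \<longlongrightarrow> B - A + c) (at_right 0)"
    by (auto intro!: tendsto_eq_intros)
  have "B - A + (1 - s) * c \<le> 0" if "0 < s" "s < 1" for s
  proof -
    have "s * (B - A + (1 - s) * c) \<le> 0"
      using assms[OF that] by (simp add: algebra_simps)
    with that show ?thesis by (simp add: mult_le_0_iff)
  qed
  then show "\<forall>\<^sub>F s in at_right 0. B - A + (1 - s) * c \<le> 0"
    using eventually_at_right_real[of 0 1] by (auto elim: eventually_mono)
qed simp

lemma sum_mult_convex_comb:
  fixes f a b :: "'i \<Rightarrow> real"
  shows "(\<Sum>q\<in>P. f q * ((1 - s) * a q + s * b q))
    = (1 - s) * (\<Sum>q\<in>P. f q * a q) + s * (\<Sum>q\<in>P. f q * b q)"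
proof -
  have "f q * ((1 - s) * a q + s * b q) = (1 - s) * (f q * a q) + s * (f q * b q)" for q
    by (simp add: algebra_simps)
  then show ?thesis by (simp add: sum.distrib sum_distrib_left)
qed

definition sq_norm_on :: "'i set \<Rightarrow> ('i \<Rightarrow> real) \<Rightarrow> real" where
  "sq_norm_on P \<beta> = (\<Sum>q\<in>P. (\<beta> q)\<^sup>2)"

lemma sq_norm_on_convex_comb:
  "sq_norm_on P (\<lambda>q. (1 - s) * a q + s * b q)
    = (1 - s) * sq_norm_on P a + s * sq_norm_on P b - s * (1 - s) * sq_norm_on P (\<lambda>q. b q - a q)"
proof -
  have "((1 - s) * a q + s * b q)\<^sup>2 = (1 - s) * (a q)\<^sup>2 + s * (b q)\<^sup>2 - s * (1 - s) * (b q - a q)\<^sup>2"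
    for q
    by (simp add: power2_eq_square algebra_simps)
  then show ?thesis
    unfolding sq_norm_on_def by (simp add: sum.distrib sum_subtractf sum_distrib_left)
qed

lemma sq_norm_on_diff_commute: "sq_norm_on P (\<lambda>q. a q - b q) = sq_norm_on P (\<lambda>q. b q - a q)"
  unfolding sq_norm_on_def by (simp add: power2_commute)

definition hinge_penalty ::
    "(nat \<Rightarrow> nat \<Rightarrow> real) \<Rightarrow> (nat \<times> nat \<times> bool) set \<Rightarrow> nat \<Rightarrow> (nat \<times> nat \<times> bool \<Rightarrow> real) \<Rightarrow> real"
  where "hinge_penalty x P p \<beta> = (\<Sum>k<p. (max (Cmul x P \<beta> k - 1) 0)\<^sup>2)"

definition scaled_dual ::
    "(nat \<Rightarrow> nat \<Rightarrow> real) \<Rightarrow> (nat \<times> nat \<times> bool) set \<Rightarrow> nat \<Rightarrow> real \<Rightarrow> real \<Rightarrow> real \<Rightarrow> real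
      \<Rightarrow> (nat \<times> nat \<times> bool \<Rightarrow> real) \<Rightarrow> real"
  where "scaled_dual x P p L U eta lam \<beta> =
    - lam / 4 * sq_norm_on P \<beta> + (\<Sum>q\<in>P. tvec L U q * \<beta> q) - hinge_penalty x P p \<beta> / (2 * eta)"

lemma Dual_rescale:
  assumes "lam > 0"
  shows "Dual n p D S x L U eta lam (\<lambda>q. lam * \<beta> q)
    = lam * scaled_dual x (pairs n D S) p L U eta lam \<beta>"
proof -
  let ?P = "pairs n D S"
  have "max (lam * Cmul x ?P \<beta> k - lam) 0 = lam * max (Cmul x ?P \<beta> k - 1) 0" for k
    using assms by (simp add: max_def algebra_simps)
  then have "mvec x ?P eta lam (\<lambda>q. lam * \<beta> q) k = max (Cmul x ?P \<beta> k - 1) 0 / eta" for k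
    using assms by (simp add: mvec_def Cmul_def sum_distrib_left mult.left_commute)
  then have "lam * eta / 2 * (\<Sum>k<p. (mvec x ?P eta lam (\<lambda>q. lam * \<beta> q) k)\<^sup>2)
      = lam * (hinge_penalty x ?P p \<beta> / (2 * eta))"
    unfolding hinge_penalty_def
    by (simp add: power_divide sum_divide_distrib[symmetric] power2_eq_square)
  moreover have "(\<Sum>q\<in>?P. (lam * \<beta> q)\<^sup>2) = lam\<^sup>2 * sq_norm_on ?P \<beta>"
    unfolding sq_norm_on_def by (simp add: power_mult_distrib sum_distrib_left)
  moreover have "(\<Sum>q\<in>?P. tvec L U q * (lam * \<beta> q)) = lam * (\<Sum>q\<in>?P. tvec L U q * \<beta> q)"
    by (simp add: sum_distrib_left algebra_simps)
  ultimately show ?thesis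
    unfolding Dual_def Let_def scaled_dual_def by (simp add: power2_eq_square algebra_simps)
qed

lemma hinge_penalty_convex:
  assumes "0 \<le> s" "s \<le> 1"
  shows "hinge_penalty x P p (\<lambda>q. (1 - s) * a q + s * b q)
    \<le> (1 - s) * hinge_penalty x P p a + s * hinge_penalty x P p b"
proof -
  have "(max (Cmul x P (\<lambda>q. (1 - s) * a q + s * b q) k - 1) 0)\<^sup>2
      \<le> (1 - s) * (max (Cmul x P a k - 1) 0)\<^sup>2 + s * (max (Cmul x P b k - 1) 0)\<^sup>2" for k
  proof -
    have "Cmul x P (\<lambda>q. (1 - s) * a q + s * b q) k - 1
        = (1 - s) * (Cmul x P a k - 1) + s * (Cmul x P b k - 1)"
      unfolding Cmul_def sum_mult_convex_comb by (simp add: algebra_simps)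
    then show ?thesis
      using convex_onD[OF convex_on_pos_part_sq, of s "Cmul x P a k - 1" "Cmul x P b k - 1"] assms
      by simp
  qed
  then show ?thesis
    unfolding hinge_penalty_def by (simp add: sum_distrib_left sum.distrib[symmetric] sum_mono)
qed

lemma scaled_dual_strongly_concave:
  assumes "0 \<le> s" "s \<le> 1" "eta > 0"
  shows "(1 - s) * scaled_dual x P p L U eta lam a + s * scaled_dual x P p L U eta lam b
      + s * (1 - s) * (lam / 4 * sq_norm_on P (\<lambda>q. b q - a q))
    \<le> scaled_dual x P p L U eta lam (\<lambda>q. (1 - s) * a q + s * b q)"
proof -
  let ?c = "\<lambda>q. (1 - s) * a q + s * b q" and ?T = "\<lambda>\<beta>. \<Sum>q\<in>P. tvec L U q * \<beta> q"
  let ?Q = "\<lambda>\<beta>. - lam / 4 * sq_norm_on P \<beta> + ?T \<beta>"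
    and ?H = "\<lambda>\<beta>. hinge_penalty x P p \<beta> / (2 * eta)"
  have hinge: "?H ?c \<le> (1 - s) * ?H a + s * ?H b"
    using divide_right_mono[OF hinge_penalty_convex[OF assms(1,2)], of "2 * eta" x P p a b] assms(3)
    by (simp add: add_divide_distrib)
  have "(1 - s) * scaled_dual x P p L U eta lam a + s * scaled_dual x P p L U eta lam b
      + s * (1 - s) * (lam / 4 * sq_norm_on P (\<lambda>q. b q - a q))
    = (1 - s) * ?Q a + s * ?Q b + s * (1 - s) * (lam / 4 * sq_norm_on P (\<lambda>q. b q - a q))
      - ((1 - s) * ?H a + s * ?H b)"
    unfolding scaled_dual_def by (simp add: algebra_simps)
  also have "\<dots> \<le> (1 - s) * ?Q a + s * ?Q b
      + s * (1 - s) * (lam / 4 * sq_norm_on P (\<lambda>q. b q - a q)) - ?H ?c"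
    using hinge by linarith
  also have "\<dots> = scaled_dual x P p L U eta lam ?c"
    unfolding scaled_dual_def sq_norm_on_convex_comb sum_mult_convex_comb by (simp add: field_simps)
  finally show ?thesis .
qed

lemma scaled_dual_lam_diff:
  "scaled_dual x P p L U eta lam0 \<beta> - scaled_dual x P p L U eta lam1 \<beta>
    = (lam1 - lam0) / 4 * sq_norm_on P \<beta>"
  unfolding scaled_dual_def by (simp add: algebra_simps diff_divide_distrib)

lemma feasible_convex_comb:
  assumes "feasible P a" "feasible P b" "0 \<le> s" "s \<le> 1"
  shows "feasible P (\<lambda>q. (1 - s) * a q + s * b q)"
  using assms unfolding feasible_def by auto

lemma feasible_scale:
  assumes "feasible P a" "0 \<le> c"
  shows "feasible P (\<lambda>q. c * a q)"
  using assms unfolding feasible_def by auto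

lemma dual_optimal_rescaled:
  assumes "dual_optimal n p D S x L U eta lam \<alpha>" "lam > 0"
  shows "feasible (pairs n D S) (\<lambda>q. \<alpha> q / lam)"
    and "\<And>\<beta>. feasible (pairs n D S) \<beta> \<Longrightarrow>
      scaled_dual x (pairs n D S) p L U eta lam \<beta>
        \<le> scaled_dual x (pairs n D S) p L U eta lam (\<lambda>q. \<alpha> q / lam)"
proof -
  have feasible: "feasible (pairs n D S) \<alpha>"
    and opt: "\<And>\<beta>. feasible (pairs n D S) \<beta> \<Longrightarrow>
      Dual n p D S x L U eta lam \<beta> \<le> Dual n p D S x L U eta lam \<alpha>"
    using assms(1) unfolding dual_optimal_def by auto
  show "feasible (pairs n D S) (\<lambda>q. \<alpha> q / lam)"
    using feasible_scale[OF feasible, of "1 / lam"] assms(2) by simp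
  fix \<beta> assume "feasible (pairs n D S) \<beta>"
  then have "Dual n p D S x L U eta lam (\<lambda>q. lam * \<beta> q)
      \<le> Dual n p D S x L U eta lam (\<lambda>q. lam * (\<alpha> q / lam))"
    using opt[OF feasible_scale[of _ \<beta> lam]] assms(2) by simp
  then show "scaled_dual x (pairs n D S) p L U eta lam \<beta>
      \<le> scaled_dual x (pairs n D S) p L U eta lam (\<lambda>q. \<alpha> q / lam)"
    unfolding Dual_rescale[OF assms(2)] using assms(2) by simp
qed

lemma dual_optimal_gap:
  assumes "dual_optimal n p D S x L U eta lam \<alpha>" "eta > 0" "lam > 0" "feasible (pairs n D S) \<beta>"
  shows "scaled_dual x (pairs n D S) p L U eta lam \<beta>
      - scaled_dual x (pairs n D S) p L U eta lam (\<lambda>q. \<alpha> q / lam)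
    + lam / 4 * sq_norm_on (pairs n D S) (\<lambda>q. \<beta> q - \<alpha> q / lam) \<le> 0"
proof (rule strongly_concave_max_gap)
  note opt = dual_optimal_rescaled[OF assms(1,3)]
  fix s :: real assume "0 < s" "s < 1"
  then show "(1 - s) * scaled_dual x (pairs n D S) p L U eta lam (\<lambda>q. \<alpha> q / lam)
      + s * scaled_dual x (pairs n D S) p L U eta lam \<beta>
      + s * (1 - s) * (lam / 4 * sq_norm_on (pairs n D S) (\<lambda>q. \<beta> q - \<alpha> q / lam))
    \<le> scaled_dual x (pairs n D S) p L U eta lam (\<lambda>q. \<alpha> q / lam)"
    using scaled_dual_strongly_concave[of s eta x "pairs n D S" p L U lam "\<lambda>q. \<alpha> q / lam" \<beta>]
      opt(2)[OF feasible_convex_comb[OF opt(1) assms(4), of s]] assms(2)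
    by simp
qed

lemma sq_norm_on_shift_identity:
  fixes lam0 lam1 :: real
  assumes "lam0 \<noteq> 0" "lam1 \<noteq> 0"
  shows "sq_norm_on P (\<lambda>q. a1 q - (lam0 + lam1) / (2 * lam0) * a0 q)
      - sq_norm_on P (\<lambda>q. (lam0 - lam1) / (2 * lam0) * a0 q)
    = lam1 / 2 * ((lam1 - lam0)
        * (sq_norm_on P (\<lambda>q. a1 q / lam1) - sq_norm_on P (\<lambda>q. a0 q / lam0))
      + (lam0 + lam1) * sq_norm_on P (\<lambda>q. a1 q / lam1 - a0 q / lam0))"
proof -
  have pointwise: "(a1 q - (lam0 + lam1) / (2 * lam0) * a0 q)\<^sup>2 - ((lam0 - lam1) / (2 * lam0) * a0 q)\<^sup>2
    = lam1 / 2 * ((lam1 - lam0) * ((a1 q / lam1)\<^sup>2 - (a0 q / lam0)\<^sup>2)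
      + (lam0 + lam1) * (a1 q / lam1 - a0 q / lam0)\<^sup>2)" for q
    using assms by (simp add: power2_eq_square field_simps)
  have "sq_norm_on P (\<lambda>q. a1 q - (lam0 + lam1) / (2 * lam0) * a0 q)
      - sq_norm_on P (\<lambda>q. (lam0 - lam1) / (2 * lam0) * a0 q)
    = (\<Sum>q\<in>P. lam1 / 2 * ((lam1 - lam0) * ((a1 q / lam1)\<^sup>2 - (a0 q / lam0)\<^sup>2)
      + (lam0 + lam1) * (a1 q / lam1 - a0 q / lam0)\<^sup>2))"
    unfolding sq_norm_on_def sum_subtractf[symmetric] pointwise ..
  also have "\<dots> = lam1 / 2 * ((lam1 - lam0)
        * (sq_norm_on P (\<lambda>q. a1 q / lam1) - sq_norm_on P (\<lambda>q. a0 q / lam0))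
      + (lam0 + lam1) * sq_norm_on P (\<lambda>q. a1 q / lam1 - a0 q / lam0))"
    unfolding sq_norm_on_def by (simp only: sum_distrib_left[symmetric] sum.distrib sum_subtractf)
  finally show ?thesis .
qed

theorem theorem2:
  fixes n K p :: nat and D S :: "nat \<Rightarrow> nat set" and x :: "nat \<Rightarrow> nat \<Rightarrow> real"
    and L U eta lam0 lam1 :: real and \<alpha>0 \<alpha>1 :: "nat \<times> nat \<times> bool \<Rightarrow> real"
  assumes "n \<ge> 1" and "K \<ge> 1" and "p \<ge> 1"
    and "\<And>i k. i \<in> {1..n} \<Longrightarrow> k < p \<Longrightarrow> 0 \<le> x i k"
    and "\<And>i. i \<in> {1..n} \<Longrightarrow> D i \<subseteq> {1..n} \<and> card (D i) = K"
    and "\<And>i. i \<in> {1..n} \<Longrightarrow> S i \<subseteq> {1..n} \<and> card (S i) = K"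
    and "L \<ge> U" and "U \<ge> 0" and "eta > 0"
    and "lam0 > 0" and "lam1 > 0"
    and "dual_optimal n p D S x L U eta lam0 \<alpha>0"
    and "dual_optimal n p D S x L U eta lam1 \<alpha>1"
  shows "(\<Sum>q\<in>pairs n D S. (\<alpha>1 q - (lam0 + lam1) / (2 * lam0) * \<alpha>0 q)\<^sup>2)
         \<le> (\<Sum>q\<in>pairs n D S. ((lam0 - lam1) / (2 * lam0) * \<alpha>0 q)\<^sup>2)"
proof -
  let ?P = "pairs n D S" and ?\<Phi> = "scaled_dual x (pairs n D S) p L U eta"
  define \<beta>0 \<beta>1 where "\<beta>0 = (\<lambda>q. \<alpha>0 q / lam0)" and "\<beta>1 = (\<lambda>q. \<alpha>1 q / lam1)"
  have gap0: "?\<Phi> lam0 \<beta>1 - ?\<Phi> lam0 \<beta>0 + lam0 / 4 * sq_norm_on ?P (\<lambda>q. \<beta>1 q - \<beta>0 q) \<le> 0"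
    using dual_optimal_gap[OF assms(12,9,10) dual_optimal_rescaled(1)[OF assms(13,11)]]
    unfolding \<beta>0_def \<beta>1_def .
  have gap1: "?\<Phi> lam1 \<beta>0 - ?\<Phi> lam1 \<beta>1 + lam1 / 4 * sq_norm_on ?P (\<lambda>q. \<beta>0 q - \<beta>1 q) \<le> 0"
    using dual_optimal_gap[OF assms(13,9,11) dual_optimal_rescaled(1)[OF assms(12,10)]]
    unfolding \<beta>0_def \<beta>1_def .
  have "(lam1 - lam0) * (sq_norm_on ?P \<beta>1 - sq_norm_on ?P \<beta>0)
      + (lam0 + lam1) * sq_norm_on ?P (\<lambda>q. \<beta>1 q - \<beta>0 q) \<le> 0"
    using add_mono[OF gap0 gap1] scaled_dual_lam_diff[of x ?P p L U eta lam0 \<beta>1 lam1]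
      scaled_dual_lam_diff[of x ?P p L U eta lam0 \<beta>0 lam1]
      sq_norm_on_diff_commute[of ?P \<beta>0 \<beta>1]
    by (simp add: algebra_simps)
  then have "lam1 / 2 * ((lam1 - lam0) * (sq_norm_on ?P \<beta>1 - sq_norm_on ?P \<beta>0)
      + (lam0 + lam1) * sq_norm_on ?P (\<lambda>q. \<beta>1 q - \<beta>0 q)) \<le> 0"
    using assms(11) by (simp add: mult_nonneg_nonpos)
  then show ?thesis
    using sq_norm_on_shift_identity[of lam0 lam1 ?P \<alpha>1 \<alpha>0] assms(10,11)
    unfolding sq_norm_on_def \<beta>0_def \<beta>1_def by linarith
qed

end
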